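(* Let $Y^{(\infty)}$ and $Y^{*(\infty)}$ be independent sequences, both with joint distribution $P_\theta$ for the same true $\theta\in\Theta$. Let $\hat\Theta_{1-\varepsilon}(Y^{(n)})$ be Robbins' regions built with weight function $\pi$ and $\hat\Theta^*_{1-\varepsilon}(Y^{*(n')})$ Robbins' regions built with a possibly different strictly positive weight function $\pi^*$, with the same $\varepsilon\in(0,1)$. Then $$P_\theta\big(\theta\in\hat\Theta_{1-\varepsilon}(Y^{(n)})\cap\hat\Theta^*_{1-\varepsilon}(Y^{*(n')})\text{ for every }n,n'\ge1\big)\ge(1-\varepsilon)^2,$$ and in particular, for all $n,n'\ge1$, $P_\theta\big(\hat\Theta_{1-\varepsilon}(Y^{(n)})\cap\hat\Theta^*_{1-\varepsilon}(Y^{*(n')})\neq\emptyset\big)\ge(1-\varepsilon)^2$.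
   Context: The joint distribution $P_\theta$ of a sequence $(Y_1,Y_2,\ldots)$, $\theta\in\Theta\subseteq\mathbb{R}^p$, is such that $Y^{(n)}=(Y_1,\ldots,Y_n)$ has density $p_n(y^{(n)};\theta)$, strictly positive on a support not depending on $\theta$, forming a consistent family in $n$. For a strictly positive probability density $\pi$ on $\Theta$, $q_n(y^{(n)})=\int_\Theta p_n(y^{(n)};\theta)\pi(\theta)d\theta$ and Robbins' region is $\hat\Theta_{1-\varepsilon}(y^{(n)})=\{\theta\in\Theta:p_n(y^{(n)};\theta)\ge\varepsilon q_n(y^{(n)})\}$; $\hat\Theta^*$ is defined in the same way with $\pi^*$ in place of $\pi$. *)

theory Defs
  imports "HOL-Probability.Probability"
begin

definition robbins_mix ::
  "('y \<Rightarrow> 'b::euclidean_space \<Rightarrow> real) \<Rightarrow> ('b \<Rightarrow> real) \<Rightarrow> 'b set \<Rightarrow> 'y \<Rightarrow> ennreal" where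
  "robbins_mix pn w \<Theta> y = (\<integral>\<^sup>+ t\<in>\<Theta>. ennreal (pn y t * w t) \<partial>lborel)"

definition robbins_region ::
  "('y \<Rightarrow> 'b::euclidean_space \<Rightarrow> real) \<Rightarrow> ('b \<Rightarrow> real) \<Rightarrow> 'b set \<Rightarrow> real \<Rightarrow> 'y \<Rightarrow> 'b set" where
  "robbins_region pn w \<Theta> \<epsilon> y =
     {t \<in> \<Theta>. ennreal \<epsilon> * robbins_mix pn w \<Theta> y \<le> ennreal (pn y t)}"

end

theory Submission
  imports Defs
begin

text \<open>
  The likelihood ratio \<open>q\<^sub>n(Y\<^sup>(\<^sup>n\<^sup>)) / p\<^sub>n(Y\<^sup>(\<^sup>n\<^sup>);\<theta>)\<close> is a nonnegative
  \<open>P\<^sub>\<theta>\<close>-martingale of mean one, so by Ville's inequality it exceeds \<open>1/\<epsilon>\<close> at some time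
  with probability at most \<open>\<epsilon>\<close>; that is, \<open>\<theta>\<close> lies in every Robbins region with
  probability at least \<open>1 - \<epsilon>\<close>. Ville's inequality is proved directly: splitting the
  exceedance event according to the first exceedance time \<open>n\<close>, its \<open>P\<^sub>\<theta>\<close>-probability is at
  most \<open>\<epsilon>\<close> times the mixture probability of the same disjoint events, which by Tonelli is
  \<open>\<epsilon> \<integral> P\<^sub>t(\<dots>) \<pi>(t) dt \<le> \<epsilon>\<close>. Independence of the two sequences then multiplies the
  two coverage probabilities.
\<close>

definition first_entry ::
  "'a measure \<Rightarrow> (nat \<Rightarrow> (nat \<Rightarrow> 'a) set) \<Rightarrow> nat \<Rightarrow> (nat \<Rightarrow> 'a) set" where
  "first_entry M A n = {y \<in> space (PiM {..<n} (\<lambda>_. M)).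
     1 \<le> n \<and> y \<in> A n \<and> (\<forall>k\<in>{1..<n}. restrict y {..<k} \<notin> A k)}"

lemma sets_first_entry:
  assumes A: "\<And>n. A n \<in> sets (PiM {..<n} (\<lambda>_. M))"
  shows "first_entry M A n \<in> sets (PiM {..<n} (\<lambda>_. M))"
proof -
  let ?Mn = "\<lambda>n. PiM {..<n} (\<lambda>_. M)"
  have restr: "(\<lambda>y. restrict y {..<k}) \<in> measurable (?Mn n) (?Mn k)" if "k \<le> n" for k
    using that by (intro measurable_restrict_subset) auto
  have "first_entry M A n = (if 1 \<le> n then A n \<inter> (\<Inter>k\<in>{1..<n}.
      (\<lambda>y. restrict y {..<k}) -` (space (?Mn k) - A k) \<inter> space (?Mn n)) else {})"
    using sets.sets_into_space[OF A] measurable_space[OF restr]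
    by (auto simp: first_entry_def)
  also have "\<dots> \<in> sets (?Mn n)"
    using A by (auto intro!: measurable_sets[OF restr])
  finally show ?thesis .
qed

lemma disjoint_family_prefix_vimage_first_entry:
  "disjoint_family (\<lambda>n. (\<lambda>\<omega>. restrict \<omega> {..<n}) -` first_entry M A n)"
proof -
  have "\<omega> \<notin> (\<lambda>\<omega>. restrict \<omega> {..<n}) -` first_entry M A n"
    if "m < n" "\<omega> \<in> (\<lambda>\<omega>. restrict \<omega> {..<m}) -` first_entry M A m" for m n \<omega>
  proof -
    have "restrict (restrict \<omega> {..<n}) {..<m} = restrict \<omega> {..<m}"
      using \<open>m < n\<close> by auto
    moreover have "m \<in> {1..<n}" "restrict \<omega> {..<m} \<in> A m"
      using that by (auto simp: first_entry_def)
    ultimately show ?thesis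
      by (force simp: first_entry_def simp del: restrict_restrict)
  qed
  then show ?thesis
    unfolding disjoint_family_on_def by (metis disjoint_iff linorder_neqE_nat)
qed

lemma UN_prefix_vimage_first_entry:
  "(\<Union>n. (\<lambda>\<omega>. restrict \<omega> {..<n}) -` first_entry M A n) \<inter> space (PiM UNIV (\<lambda>_. M))
     = {\<omega> \<in> space (PiM UNIV (\<lambda>_. M)). \<exists>n\<ge>1. restrict \<omega> {..<n} \<in> A n}"
proof (intro equalityI subsetI)
  fix \<omega> assume "\<omega> \<in> {\<omega> \<in> space (PiM UNIV (\<lambda>_. M)). \<exists>n\<ge>1. restrict \<omega> {..<n} \<in> A n}"
  then have \<omega>: "\<omega> \<in> space (PiM UNIV (\<lambda>_. M))" and ex: "\<exists>n. 1 \<le> n \<and> restrict \<omega> {..<n} \<in> A n"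
    by auto
  define n where "n = (LEAST n. 1 \<le> n \<and> restrict \<omega> {..<n} \<in> A n)"
  have n: "1 \<le> n" "restrict \<omega> {..<n} \<in> A n"
    using LeastI_ex[OF ex] by (auto simp: n_def)
  have "restrict (restrict \<omega> {..<n}) {..<k} \<notin> A k" if "k \<in> {1..<n}" for k
  proof -
    have "restrict (restrict \<omega> {..<n}) {..<k} = restrict \<omega> {..<k}"
      using that by auto
    then show ?thesis
      using not_less_Least[of k "\<lambda>n. 1 \<le> n \<and> restrict \<omega> {..<n} \<in> A n"] that
      by (auto simp: n_def simp del: restrict_restrict)
  qed
  moreover have "restrict \<omega> {..<n} \<in> space (PiM {..<n} (\<lambda>_. M))"
    using \<omega> by (auto simp: space_PiM)
  ultimately show "\<omega> \<in> (\<Union>n. (\<lambda>\<omega>. restrict \<omega> {..<n}) -` first_entry M A n) \<inter> space (PiM UNIV (\<lambda>_. M))"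
    using n \<omega> by (auto simp: first_entry_def simp del: restrict_restrict)
qed (auto simp: first_entry_def)

locale robbins_model =
  fixes M :: "'a measure"
    and \<Theta> :: "'b::euclidean_space set"
    and p :: "nat \<Rightarrow> (nat \<Rightarrow> 'a) \<Rightarrow> 'b \<Rightarrow> real"
    and P :: "'b \<Rightarrow> (nat \<Rightarrow> 'a) measure"
  assumes sigma_finite_M: "sigma_finite_measure M"
    and sets_Theta: "\<Theta> \<in> sets lborel"
    and measurable_p: "\<And>n. (\<lambda>(y, t). p n y t) \<in> borel_measurable (PiM {..<n} (\<lambda>_. M) \<Otimes>\<^sub>M lborel)"
    and p_nonneg: "\<And>n y t. y \<in> space (PiM {..<n} (\<lambda>_. M)) \<Longrightarrow> t \<in> \<Theta> \<Longrightarrow> 0 \<le> p n y t"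
    and prob_space_P: "\<And>t. t \<in> \<Theta> \<Longrightarrow> prob_space (P t)"
    and sets_P: "\<And>t. t \<in> \<Theta> \<Longrightarrow> sets (P t) = sets (PiM UNIV (\<lambda>_::nat. M))"
    and distr_P_prefix: "\<And>t n. t \<in> \<Theta> \<Longrightarrow> n \<ge> 1 \<Longrightarrow>
        distr (P t) (PiM {..<n} (\<lambda>_. M)) (\<lambda>\<omega>. restrict \<omega> {..<n})
          = density (PiM {..<n} (\<lambda>_. M)) (\<lambda>y. ennreal (p n y t))"
begin

abbreviation Mn :: "nat \<Rightarrow> (nat \<Rightarrow> 'a) measure" where
  "Mn n \<equiv> PiM {..<n} (\<lambda>_. M)"

lemma sigma_finite_Mn: "sigma_finite_measure (Mn n)"
  using sigma_finite_M
  by (intro product_sigma_finite.sigma_finite) (auto simp: product_sigma_finite_def)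

lemma borel_measurable_p_pair[measurable]:
  "(\<lambda>x. p n (fst x) (snd x)) \<in> borel_measurable (Mn n \<Otimes>\<^sub>M lborel)"
  using measurable_p[of n] by (simp add: case_prod_beta')

lemma borel_measurable_p_pair_swap[measurable]:
  "(\<lambda>x. p n (snd x) (fst x)) \<in> borel_measurable (lborel \<Otimes>\<^sub>M Mn n)"
  using measurable_compose[OF measurable_pair_swap' borel_measurable_p_pair] by (simp add: case_prod_beta')

lemma borel_measurable_p_left[measurable]: "(\<lambda>y. p n y t) \<in> borel_measurable (Mn n)"
  using measurable_compose[OF measurable_Pair2' borel_measurable_p_pair] by simp

lemma borel_measurable_p_right[measurable]:
  "y \<in> space (Mn n) \<Longrightarrow> p n y \<in> borel_measurable lborel"
  using measurable_compose[OF measurable_Pair1' borel_measurable_p_pair] by simp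

lemma space_P: "t \<in> \<Theta> \<Longrightarrow> space (P t) = space (PiM UNIV (\<lambda>_. M))"
  using sets_eq_imp_space_eq[OF sets_P] .

lemma measurable_prefix_P:
  assumes "t \<in> \<Theta>"
  shows "(\<lambda>\<omega>. restrict \<omega> {..<n}) \<in> measurable (P t) (Mn n)"
  using measurable_cong_sets[OF sets_P[OF assms] refl, of "Mn n"]
  by (simp add: measurable_restrict_subset)

lemma emeasure_P_prefix_vimage:
  assumes t: "t \<in> \<Theta>" and n: "1 \<le> n" and D: "D \<in> sets (Mn n)"
  shows "emeasure (P t) ((\<lambda>\<omega>. restrict \<omega> {..<n}) -` D \<inter> space (P t))
           = (\<integral>\<^sup>+ y. ennreal (p n y t) * indicator D y \<partial>Mn n)"
proof -
  have "emeasure (P t) ((\<lambda>\<omega>. restrict \<omega> {..<n}) -` D \<inter> space (P t))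
      = emeasure (distr (P t) (Mn n) (\<lambda>\<omega>. restrict \<omega> {..<n})) D"
    by (rule emeasure_distr[OF measurable_prefix_P[OF t] D, symmetric])
  also have "\<dots> = emeasure (density (Mn n) (\<lambda>y. ennreal (p n y t))) D"
    by (simp add: distr_P_prefix[OF t n])
  also have "\<dots> = (\<integral>\<^sup>+ y. ennreal (p n y t) * indicator D y \<partial>Mn n)"
    using D by (intro emeasure_density) measurable
  finally show ?thesis .
qed

lemma borel_measurable_robbins_mix[measurable]:
  assumes [measurable]: "w \<in> borel_measurable lborel"
  shows "robbins_mix (p n) w \<Theta> \<in> borel_measurable (Mn n)"
proof -
  note [measurable] = sets_Theta
  have "(\<lambda>(y, t). ennreal (p n y t * w t) * indicator \<Theta> t) \<in> borel_measurable (Mn n \<Otimes>\<^sub>M lborel)"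
    by measurable
  then show ?thesis
    unfolding robbins_mix_def by (rule lborel.borel_measurable_nn_integral)
qed

lemma nn_integral_robbins_mix_indicator:
  assumes [measurable]: "w \<in> borel_measurable lborel" "D \<in> sets (Mn n)"
    and w_nonneg: "\<And>t. t \<in> \<Theta> \<Longrightarrow> 0 \<le> w t"
  shows "(\<integral>\<^sup>+ y. robbins_mix (p n) w \<Theta> y * indicator D y \<partial>Mn n)
    = (\<integral>\<^sup>+ t\<in>\<Theta>. ennreal (w t) * (\<integral>\<^sup>+ y. ennreal (p n y t) * indicator D y \<partial>Mn n) \<partial>lborel)"
proof -
  note [measurable] = sets_Theta
  interpret pair_sigma_finite "Mn n" lborel
    by (simp add: pair_sigma_finite_def sigma_finite_Mn lborel.sigma_finite_measure_axioms)
  have "(\<integral>\<^sup>+ y. robbins_mix (p n) w \<Theta> y * indicator D y \<partial>Mn n)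
      = (\<integral>\<^sup>+ y. \<integral>\<^sup>+ t. ennreal (p n y t * w t) * indicator \<Theta> t * indicator D y \<partial>lborel \<partial>Mn n)"
    unfolding robbins_mix_def
    by (intro nn_integral_cong nn_integral_multc[symmetric]) (measurable, measurable, measurable)
  also have "\<dots> = (\<integral>\<^sup>+ t. \<integral>\<^sup>+ y. ennreal (p n y t * w t) * indicator \<Theta> t * indicator D y \<partial>Mn n \<partial>lborel)"
    by (rule Fubini'[symmetric]) measurable
  also have "\<dots> = (\<integral>\<^sup>+ t\<in>\<Theta>. ennreal (w t) * (\<integral>\<^sup>+ y. ennreal (p n y t) * indicator D y \<partial>Mn n) \<partial>lborel)"
  proof (intro nn_integral_cong)
    fix t :: 'b
    show "(\<integral>\<^sup>+ y. ennreal (p n y t * w t) * indicator \<Theta> t * indicator D y \<partial>Mn n)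
        = ennreal (w t) * (\<integral>\<^sup>+ y. ennreal (p n y t) * indicator D y \<partial>Mn n) * indicator \<Theta> t"
    proof (cases "t \<in> \<Theta>")
      case True
      then have "(\<integral>\<^sup>+ y. ennreal (p n y t * w t) * indicator \<Theta> t * indicator D y \<partial>Mn n)
          = (\<integral>\<^sup>+ y. ennreal (w t) * (ennreal (p n y t) * indicator D y) \<partial>Mn n)"
        using p_nonneg w_nonneg by (intro nn_integral_cong) (simp add: ennreal_mult ac_simps)
      also have "\<dots> = ennreal (w t) * (\<integral>\<^sup>+ y. ennreal (p n y t) * indicator D y \<partial>Mn n)"
        by (rule nn_integral_cmult) measurable
      finally show ?thesis
        using True by simp
    qed simp
  qed
  finally show ?thesis .
qed

lemma sets_P_ever_in:
  assumes t: "t \<in> \<Theta>" and A[measurable]: "\<And>n. A n \<in> sets (Mn n)"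
  shows "{\<omega> \<in> space (P t). \<exists>n\<ge>1. restrict \<omega> {..<n} \<in> A n} \<in> sets (P t)"
proof -
  note [measurable] = measurable_prefix_P[OF t]
  show ?thesis by measurable
qed

lemma emeasure_P_ever_in:
  assumes t: "t \<in> \<Theta>" and A: "\<And>n. A n \<in> sets (Mn n)"
  shows "emeasure (P t) {\<omega> \<in> space (P t). \<exists>n\<ge>1. restrict \<omega> {..<n} \<in> A n}
    = (\<Sum>n. \<integral>\<^sup>+ y. ennreal (p n y t) * indicator (first_entry M A n) y \<partial>Mn n)"
proof -
  define F where "F n = (\<lambda>\<omega>. restrict \<omega> {..<n}) -` first_entry M A n \<inter> space (P t)" for n
  have F_sets: "F n \<in> sets (P t)" for n
    unfolding F_def by (rule measurable_sets[OF measurable_prefix_P[OF t] sets_first_entry[OF A]])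
  have "disjoint_family F"
    using disjoint_family_prefix_vimage_first_entry[of M A]
    unfolding F_def disjoint_family_on_def by blast
  have "{\<omega> \<in> space (P t). \<exists>n\<ge>1. restrict \<omega> {..<n} \<in> A n} = (\<Union>n. F n)"
    using UN_prefix_vimage_first_entry[of M A] by (simp add: F_def space_P[OF t])
  then have "emeasure (P t) {\<omega> \<in> space (P t). \<exists>n\<ge>1. restrict \<omega> {..<n} \<in> A n}
      = (\<Sum>n. emeasure (P t) (F n))"
    using F_sets \<open>disjoint_family F\<close> by (simp add: suminf_emeasure image_subset_iff)
  also have "\<dots> = (\<Sum>n. \<integral>\<^sup>+ y. ennreal (p n y t) * indicator (first_entry M A n) y \<partial>Mn n)"
  proof (intro suminf_cong)
    fix n
    show "emeasure (P t) (F n) = (\<integral>\<^sup>+ y. ennreal (p n y t) * indicator (first_entry M A n) y \<partial>Mn n)"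
    proof (cases "n = 0")
      case True
      then show ?thesis by (simp add: F_def first_entry_def)
    next
      case False
      then show ?thesis
        unfolding F_def using t A by (intro emeasure_P_prefix_vimage sets_first_entry) auto
    qed
  qed
  finally show ?thesis .
qed

lemma borel_measurable_nn_integral_p[measurable]:
  assumes [measurable]: "D \<in> sets (Mn n)"
  shows "(\<lambda>t. \<integral>\<^sup>+ y. ennreal (p n y t) * indicator D y \<partial>Mn n) \<in> borel_measurable lborel"
proof -
  have "(\<lambda>(t, y). ennreal (p n y t) * indicator D y) \<in> borel_measurable (lborel \<Otimes>\<^sub>M Mn n)"
    by measurable
  then show ?thesis
    by (rule sigma_finite_measure.borel_measurable_nn_integral[OF sigma_finite_Mn])
qed

lemma emeasure_P_ever_exceeds_le:
  assumes w_meas[measurable]: "w \<in> borel_measurable lborel"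
    and w_nonneg: "\<And>t. t \<in> \<Theta> \<Longrightarrow> 0 \<le> w t"
    and w_int: "(\<integral>\<^sup>+ t\<in>\<Theta>. ennreal (w t) \<partial>lborel) \<le> 1"
    and \<theta>: "\<theta> \<in> \<Theta>"
    and A[measurable]: "\<And>n. A n \<in> sets (Mn n)"
    and A_exceeds: "\<And>n y. y \<in> A n \<Longrightarrow> ennreal (p n y \<theta>) \<le> ennreal \<epsilon> * robbins_mix (p n) w \<Theta> y"
  shows "emeasure (P \<theta>) {\<omega> \<in> space (P \<theta>). \<exists>n\<ge>1. restrict \<omega> {..<n} \<in> A n} \<le> ennreal \<epsilon>"
proof -
  note [measurable] = sets_Theta sets_first_entry[OF A]
  define g where "g n t = (\<integral>\<^sup>+ y. ennreal (p n y t) * indicator (first_entry M A n) y \<partial>Mn n)" for n t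
  have g_meas[measurable]: "g n \<in> borel_measurable lborel" for n
    unfolding g_def by (intro borel_measurable_nn_integral_p sets_first_entry A)
  have sum_g_le_1: "(\<Sum>n. g n t) \<le> 1" if "t \<in> \<Theta>" for t
  proof -
    interpret prob_space "P t"
      using prob_space_P[OF that] .
    have "(\<Sum>n. g n t) = emeasure (P t) {\<omega> \<in> space (P t). \<exists>n\<ge>1. restrict \<omega> {..<n} \<in> A n}"
      unfolding g_def by (rule emeasure_P_ever_in[OF that A, symmetric])
    then show ?thesis
      by (simp add: emeasure_le_1)
  qed
  have "emeasure (P \<theta>) {\<omega> \<in> space (P \<theta>). \<exists>n\<ge>1. restrict \<omega> {..<n} \<in> A n} = (\<Sum>n. g n \<theta>)"
    unfolding g_def by (rule emeasure_P_ever_in[OF \<theta> A])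
  also have "\<dots> \<le> (\<Sum>n. \<integral>\<^sup>+ y. ennreal \<epsilon> * (robbins_mix (p n) w \<Theta> y * indicator (first_entry M A n) y) \<partial>Mn n)"
    unfolding g_def
    by (intro suminf_le nn_integral_mono summableI)
       (auto simp: first_entry_def indicator_def intro: A_exceeds)
  also have "\<dots> = (\<Sum>n. ennreal \<epsilon> * (\<integral>\<^sup>+ t\<in>\<Theta>. ennreal (w t) * g n t \<partial>lborel))"
    unfolding g_def
    by (simp add: nn_integral_cmult nn_integral_robbins_mix_indicator w_nonneg)
  also have "\<dots> = ennreal \<epsilon> * (\<integral>\<^sup>+ t\<in>\<Theta>. ennreal (w t) * (\<Sum>n. g n t) \<partial>lborel)"
    by (simp add: nn_integral_suminf[symmetric] ennreal_suminf_cmult mult.assoc)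
  also have "\<dots> \<le> ennreal \<epsilon> * (\<integral>\<^sup>+ t\<in>\<Theta>. ennreal (w t) \<partial>lborel)"
  proof (intro mult_left_mono nn_integral_mono)
    fix t
    show "ennreal (w t) * (\<Sum>n. g n t) * indicator \<Theta> t \<le> ennreal (w t) * indicator \<Theta> t"
      using mult_left_mono[OF sum_g_le_1, of t "ennreal (w t)"] by (cases "t \<in> \<Theta>") auto
  qed simp
  also have "\<dots> \<le> ennreal \<epsilon>"
    using mult_left_mono[OF w_int, of "ennreal \<epsilon>"] by simp
  finally show ?thesis .
qed

definition coverage_event :: "('b \<Rightarrow> real) \<Rightarrow> real \<Rightarrow> 'b \<Rightarrow> (nat \<Rightarrow> 'a) set" where
  "coverage_event w \<epsilon> \<theta> =
     {\<omega> \<in> space (P \<theta>). \<forall>n\<ge>1. \<theta> \<in> robbins_region (p n) w \<Theta> \<epsilon> (restrict \<omega> {..<n})}"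

lemma coverage_event_eq_compl:
  assumes "\<theta> \<in> \<Theta>"
  shows "coverage_event w \<epsilon> \<theta> = space (P \<theta>) - {\<omega> \<in> space (P \<theta>). \<exists>n\<ge>1. restrict \<omega> {..<n} \<in>
    {y \<in> space (Mn n). ennreal (p n y \<theta>) < ennreal \<epsilon> * robbins_mix (p n) w \<Theta> y}}"
  using measurable_space[OF measurable_prefix_P[OF assms]] assms
  by (auto simp: coverage_event_def robbins_region_def not_less)

lemma prob_coverage_event:
  assumes w_meas[measurable]: "w \<in> borel_measurable lborel"
    and w_nonneg: "\<And>t. t \<in> \<Theta> \<Longrightarrow> 0 \<le> w t"
    and w_int: "(\<integral>\<^sup>+ t\<in>\<Theta>. ennreal (w t) \<partial>lborel) \<le> 1"
    and \<theta>: "\<theta> \<in> \<Theta>" and \<epsilon>: "0 \<le> \<epsilon>"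
  shows "coverage_event w \<epsilon> \<theta> \<in> sets (P \<theta>)"
    and "1 - \<epsilon> \<le> measure (P \<theta>) (coverage_event w \<epsilon> \<theta>)"
proof -
  interpret prob_space "P \<theta>"
    using prob_space_P[OF \<theta>] .
  define A where "A n = {y \<in> space (Mn n). ennreal (p n y \<theta>) < ennreal \<epsilon> * robbins_mix (p n) w \<Theta> y}" for n
  have A_sets: "A n \<in> sets (Mn n)" for n
    unfolding A_def by measurable
  define B where "B = {\<omega> \<in> space (P \<theta>). \<exists>n\<ge>1. restrict \<omega> {..<n} \<in> A n}"
  have B_sets: "B \<in> sets (P \<theta>)"
    unfolding B_def using sets_P_ever_in[OF \<theta> A_sets] .
  have "emeasure (P \<theta>) B \<le> ennreal \<epsilon>"
    unfolding B_def using w_nonneg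
    by (intro emeasure_P_ever_exceeds_le[OF w_meas _ w_int \<theta> A_sets]) (auto simp: A_def)
  then have "measure (P \<theta>) B \<le> \<epsilon>"
    using \<epsilon> by (simp add: emeasure_eq_measure)
  moreover have cover_eq: "coverage_event w \<epsilon> \<theta> = space (P \<theta>) - B"
    unfolding B_def A_def by (rule coverage_event_eq_compl[OF \<theta>])
  ultimately show "1 - \<epsilon> \<le> measure (P \<theta>) (coverage_event w \<epsilon> \<theta>)"
    using prob_compl[OF B_sets] by simp
  show "coverage_event w \<epsilon> \<theta> \<in> sets (P \<theta>)"
    unfolding cover_eq using B_sets by auto
qed

lemma joint_coverage_event_eq:
  "{\<omega> \<in> space (P \<theta> \<Otimes>\<^sub>M P \<theta>). \<forall>n\<ge>1. \<forall>n'\<ge>1.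
      \<theta> \<in> robbins_region (p n) w \<Theta> \<epsilon> (restrict (fst \<omega>) {..<n})
         \<inter> robbins_region (p n') w' \<Theta> \<epsilon> (restrict (snd \<omega>) {..<n'})}
    = coverage_event w \<epsilon> \<theta> \<times> coverage_event w' \<epsilon> \<theta>"
  by (auto simp: coverage_event_def space_pair_measure)

lemma coverage_event_Times_subset_nonempty:
  assumes "1 \<le> n" "1 \<le> n'"
  shows "coverage_event w \<epsilon> \<theta> \<times> coverage_event w' \<epsilon> \<theta> \<subseteq> {\<omega> \<in> space (P \<theta> \<Otimes>\<^sub>M P \<theta>).
    robbins_region (p n) w \<Theta> \<epsilon> (restrict (fst \<omega>) {..<n})
      \<inter> robbins_region (p n') w' \<Theta> \<epsilon> (restrict (snd \<omega>) {..<n'}) \<noteq> {}}"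
proof
  fix \<omega> assume \<omega>: "\<omega> \<in> coverage_event w \<epsilon> \<theta> \<times> coverage_event w' \<epsilon> \<theta>"
  then have "\<theta> \<in> robbins_region (p n) w \<Theta> \<epsilon> (restrict (fst \<omega>) {..<n})
      \<inter> robbins_region (p n') w' \<Theta> \<epsilon> (restrict (snd \<omega>) {..<n'})"
    using assms by (auto simp: coverage_event_def)
  moreover have "\<omega> \<in> space (P \<theta> \<Otimes>\<^sub>M P \<theta>)"
    using \<omega> by (auto simp: coverage_event_def space_pair_measure)
  ultimately show "\<omega> \<in> {\<omega> \<in> space (P \<theta> \<Otimes>\<^sub>M P \<theta>).
      robbins_region (p n) w \<Theta> \<epsilon> (restrict (fst \<omega>) {..<n})
        \<inter> robbins_region (p n') w' \<Theta> \<epsilon> (restrict (snd \<omega>) {..<n'}) \<noteq> {}}"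
    by blast
qed

end

lemma (in pair_prob_space) measure_pair_measure_Times:
  assumes "A \<in> sets M1" "B \<in> sets M2"
  shows "measure (M1 \<Otimes>\<^sub>M M2) (A \<times> B) = measure M1 A * measure M2 B"
  using assms by (simp add: measure_def M2.emeasure_pair_measure_Times enn2real_mult)

theorem mainTheorem10:
  fixes M :: "'a measure"
    and \<Theta> :: "'b::euclidean_space set"
    and p :: "nat \<Rightarrow> (nat \<Rightarrow> 'a) \<Rightarrow> 'b \<Rightarrow> real"
    and P :: "'b \<Rightarrow> (nat \<Rightarrow> 'a) measure"
    and w ws :: "'b \<Rightarrow> real"
    and \<epsilon> :: real
    and \<theta> :: 'b
  assumes M: "sigma_finite_measure M"
    and Theta_meas: "\<Theta> \<in> sets lborel"
    and p_meas: "\<And>n. (\<lambda>(y, t). p n y t) \<in> borel_measurable (PiM {..<n} (\<lambda>_. M) \<Otimes>\<^sub>M lborel)"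
    and p_nonneg: "\<And>n y t. y \<in> space (PiM {..<n} (\<lambda>_. M)) \<Longrightarrow> t \<in> \<Theta> \<Longrightarrow> 0 \<le> p n y t"
    and support: "\<And>n. n \<ge> 1 \<Longrightarrow> \<exists>S. \<forall>t\<in>\<Theta>. \<forall>y\<in>space (PiM {..<n} (\<lambda>_. M)).
                      (0 < p n y t \<longleftrightarrow> y \<in> S)"
    and P_prob: "\<And>t. t \<in> \<Theta> \<Longrightarrow> prob_space (P t)"
    and P_sets: "\<And>t. t \<in> \<Theta> \<Longrightarrow> sets (P t) = sets (PiM UNIV (\<lambda>_::nat. M))"
    and P_marg: "\<And>t n. t \<in> \<Theta> \<Longrightarrow> n \<ge> 1 \<Longrightarrow>
        distr (P t) (PiM {..<n} (\<lambda>_. M)) (\<lambda>\<omega>. restrict \<omega> {..<n})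
          = density (PiM {..<n} (\<lambda>_. M)) (\<lambda>y. ennreal (p n y t))"
    and w_meas: "w \<in> borel_measurable lborel"
    and w_pos: "\<And>t. t \<in> \<Theta> \<Longrightarrow> 0 < w t"
    and w_int: "(\<integral>\<^sup>+ t\<in>\<Theta>. ennreal (w t) \<partial>lborel) = 1"
    and ws_meas: "ws \<in> borel_measurable lborel"
    and ws_pos: "\<And>t. t \<in> \<Theta> \<Longrightarrow> 0 < ws t"
    and ws_int: "(\<integral>\<^sup>+ t\<in>\<Theta>. ennreal (ws t) \<partial>lborel) = 1"
    and eps: "0 < \<epsilon>" "\<epsilon> < 1"
    and theta: "\<theta> \<in> \<Theta>"
  shows "(1 - \<epsilon>)^2 \<le> measure (P \<theta> \<Otimes>\<^sub>M P \<theta>)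
           {\<omega> \<in> space (P \<theta> \<Otimes>\<^sub>M P \<theta>). \<forall>n\<ge>1. \<forall>n'\<ge>1.
              \<theta> \<in> robbins_region (p n) w \<Theta> \<epsilon> (restrict (fst \<omega>) {..<n})
                  \<inter> robbins_region (p n') ws \<Theta> \<epsilon> (restrict (snd \<omega>) {..<n'})}
         \<and> (\<forall>n\<ge>1. \<forall>n'\<ge>1. \<exists>A \<in> sets (P \<theta> \<Otimes>\<^sub>M P \<theta>).
           A \<subseteq> {\<omega> \<in> space (P \<theta> \<Otimes>\<^sub>M P \<theta>).
                  robbins_region (p n) w \<Theta> \<epsilon> (restrict (fst \<omega>) {..<n})
                  \<inter> robbins_region (p n') ws \<Theta> \<epsilon> (restrict (snd \<omega>) {..<n'}) \<noteq> {}}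
           \<and> (1 - \<epsilon>)^2 \<le> measure (P \<theta> \<Otimes>\<^sub>M P \<theta>) A)"
proof -
  interpret robbins_model M \<Theta> p P
    using M Theta_meas p_meas p_nonneg P_prob P_sets P_marg unfolding robbins_model_def by blast
  interpret pair_prob_space "P \<theta>" "P \<theta>"
    using P_prob[OF theta]
    by (simp add: pair_prob_space_def pair_sigma_finite_def prob_space_imp_sigma_finite)
  let ?E = "coverage_event w \<epsilon> \<theta>" and ?E' = "coverage_event ws \<epsilon> \<theta>"
  have E: "?E \<in> sets (P \<theta>)" "1 - \<epsilon> \<le> measure (P \<theta>) ?E"
    using prob_coverage_event[OF w_meas less_imp_le[OF w_pos] _ theta less_imp_le[OF eps(1)]] w_int
    by simp_all
  have E': "?E' \<in> sets (P \<theta>)" "1 - \<epsilon> \<le> measure (P \<theta>) ?E'"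
    using prob_coverage_event[OF ws_meas less_imp_le[OF ws_pos] _ theta less_imp_le[OF eps(1)]] ws_int
    by simp_all
  have bound: "(1 - \<epsilon>)^2 \<le> measure (P \<theta> \<Otimes>\<^sub>M P \<theta>) (?E \<times> ?E')"
    using E E' eps by (simp add: measure_pair_measure_Times power2_eq_square mult_mono)
  have "?E \<times> ?E' \<in> sets (P \<theta> \<Otimes>\<^sub>M P \<theta>)"
    using E E' by simp
  then show ?thesis
    unfolding joint_coverage_event_eq
    by (intro conjI allI impI bexI) (assumption | rule coverage_event_Times_subset_nonempty bound)+
qed

end
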